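(* Let $0<q<1$, $0\le p<1$. Let $k_n(x)=q^{-n}S_n(qx;pq,q)$ (the monic kernel polynomials of $S_n(x;p,q)$), with recurrence $k_n(x)=(x-d_n)k_{n-1}(x)-\nu_nk_{n-2}(x)$, $n\ge1$, $k_{-1}=0$, $k_0=1$, and let $\beta_n=\nu_{n+1}/(d_nd_{n+1})$, $n\ge1$. Then \[ \beta_n=\frac{q(1-q^n)(1-pq^n)}{(1+q-(1+p)q^n)(1+q-(1+p)q^{n+1})},\quad n\ge1; \] the maximal and minimal parameter sequences of $(\beta_n)$ are \[ M_n=\frac{q}{1+q-(1+p)q^{n+1}}\frac{\Delta_n}{\Delta_{n+1}},\qquad m_n=\frac{q(1-q^n)}{1+q-(1+p)q^{n+1}},\quad n\ge0; \] and the sequence \[ h_n=\frac{q(1-pq^n)}{1+q-(1+p)q^{n+1}},\quad n\ge0, \] is a parameter sequence of $(\beta_n)$ whose shell polynomials $p^h_n$ are exactly the monic generalized Stieltjes–Wigert polynomials $S_n(x;p,q)$.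
   Context: $(a;q)_n=\prod_{k=1}^n(1-aq^{k-1})$ for $n\in\{0,1,\dots\}\cup\{\infty\}$, $\begin{bmatrix}n\\k\end{bmatrix}_q=\frac{(q;q)_n}{(q;q)_k(q;q)_{n-k}}$, and $\Delta_n=(pq^n;q)_\infty-(q^n;q)_\infty$. The monic generalized Stieltjes–Wigert polynomials are $S_n(x;p,q)=(-1)^nq^{-n(n+1/2)}(p;q)_n\sum_{k=0}^n\begin{bmatrix}n\\k\end{bmatrix}_q\frac{q^{k^2}(-\sqrt q x)^k}{(p;q)_k}$. A parameter sequence for a chain sequence $(\beta_n)_{n\ge1}$ is a sequence $(h_n)_{n\ge0}$ with $0\le h_0<1$, $0<h_n<1$ for $n\ge1$, and $\beta_n=h_n(1-h_{n-1})$ for $n\ge1$; the minimal parameter sequence is the one with $h_0=0$, and the maximal one is the one whose initial value $h_0$ is the largest possible. Given a parameter sequence $(h_n)$ with $h_0>0$, the shell polynomials $p^h_n$ are the monic polynomials defined by $p^h_n(x)=(x-c^h_n)p^h_{n-1}(x)-\lambda^h_np^h_{n-2}(x)$, $p^h_{-1}=0$, $p^h_0=1$, where $c_1^h=h_0d_1$, $c_{n+1}^h=(1-h_{n-1})d_n+h_nd_{n+1}$ and $\lambda_{n+1}^h=(1-h_{n-1})h_{n-1}d_n^2$ for $n\ge1$. *)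

theory Defs
  imports "HOL-Analysis.Analysis"
begin

definition qpoch :: "real \<Rightarrow> real \<Rightarrow> nat \<Rightarrow> real" where
  "qpoch a q n = (\<Prod>k<n. 1 - a * q ^ k)"

definition qpoch_inf :: "real \<Rightarrow> real \<Rightarrow> real" where
  "qpoch_inf a q = (\<Prod>k. 1 - a * q ^ k)"

definition qbinom :: "real \<Rightarrow> nat \<Rightarrow> nat \<Rightarrow> real" where
  "qbinom q n k = qpoch q q n / (qpoch q q k * qpoch q q (n - k))"

definition Delta :: "real \<Rightarrow> real \<Rightarrow> nat \<Rightarrow> real" where
  "Delta p q n = qpoch_inf (p * q ^ n) q - qpoch_inf (q ^ n) q"

definition SW :: "nat \<Rightarrow> real \<Rightarrow> real \<Rightarrow> real \<Rightarrow> real" where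
  "SW n x p q = (-1) ^ n * q powr (- (real n * (real n + 1/2))) * qpoch p q n *
     (\<Sum>k\<le>n. qbinom q n k * q ^ (k^2) * (- sqrt q * x) ^ k / qpoch p q k)"

definition kern :: "real \<Rightarrow> real \<Rightarrow> nat \<Rightarrow> real \<Rightarrow> real" where
  "kern p q n x = SW n (q * x) (p * q) q / q ^ n"

definition param_seq :: "(nat \<Rightarrow> real) \<Rightarrow> (nat \<Rightarrow> real) \<Rightarrow> bool" where
  "param_seq \<beta> h \<longleftrightarrow> 0 \<le> h 0 \<and> h 0 < 1 \<and> (\<forall>n\<ge>1. 0 < h n \<and> h n < 1)
     \<and> (\<forall>n\<ge>1. \<beta> n = h n * (1 - h (n - 1)))"

definition minimal_param_seq :: "(nat \<Rightarrow> real) \<Rightarrow> (nat \<Rightarrow> real) \<Rightarrow> bool" where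
  "minimal_param_seq \<beta> h \<longleftrightarrow> param_seq \<beta> h \<and> h 0 = 0"

definition maximal_param_seq :: "(nat \<Rightarrow> real) \<Rightarrow> (nat \<Rightarrow> real) \<Rightarrow> bool" where
  "maximal_param_seq \<beta> h \<longleftrightarrow> param_seq \<beta> h \<and> (\<forall>g. param_seq \<beta> g \<longrightarrow> g 0 \<le> h 0)"

text \<open>Shell polynomials p^h_n built from parameter sequence h and the coefficients d_n:
  c_1 = h_0 d_1, c_(n+1) = (1-h_(n-1)) d_n + h_n d_(n+1),
  lambda_(n+1) = (1-h_(n-1)) h_(n-1) d_n^2  (n \<ge> 1).\<close>
fun shell :: "(nat \<Rightarrow> real) \<Rightarrow> (nat \<Rightarrow> real) \<Rightarrow> nat \<Rightarrow> real \<Rightarrow> real" where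
  "shell h d 0 x = 1"
| "shell h d (Suc 0) x = x - h 0 * d 1"
| "shell h d (Suc (Suc n)) x =
     (x - ((1 - h n) * d (Suc n) + h (Suc n) * d (Suc (Suc n)))) * shell h d (Suc n) x
     - (1 - h n) * h n * (d (Suc n))^2 * shell h d n x"

end

theory Submission
  imports Defs "HOL-Computational_Algebra.Polynomial"
begin

(* The monic S_n satisfy S_(n+2) = (x - c_(n+1)) S_(n+1) - lambda_n S_n with explicit c_n and
   lambda_n; coefficientwise this is a three-term identity between Gaussian binomials. Rescaling
   x by q gives the recurrence of the kernel polynomials k_n, and since k_n has exact degree n its
   recurrence coefficients d_n, nu_n are uniquely determined, which yields beta_n.
   The sequences h, m and M satisfy beta_(n+1) = h_(n+1) (1 - h_n): for M this is the three-term
   recurrence of Delta_n, which follows from (a;q)_inf = (1 - a) (aq;q)_inf. M is maximal because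
   for a parameter sequence g with g_0 > M_0 the excess g_n - M_n grows at least like q^(-n),
   as Delta_n = O(q^n); this contradicts g_n < 1. Finally the shell coefficients built from h
   and d_n are exactly c_n and lambda_n, so the shell polynomials are the S_n. *)

section \<open>q-Pochhammer symbols and Gaussian binomials\<close>

lemma qpoch_0 [simp]: "qpoch a q 0 = 1"
  by (simp add: qpoch_def)

lemma qpoch_Suc: "qpoch a q (Suc n) = qpoch a q n * (1 - a * q ^ n)"
  by (simp add: qpoch_def)

lemma qpoch_pos:
  fixes a q :: real
  assumes "0 \<le> q" "q \<le> 1" "a < 1"
  shows "0 < qpoch a q n"
  unfolding qpoch_def
proof (rule prod_pos)
  fix k
  have "a * q ^ k \<le> max a 0"
    using assms by (cases "a \<le> 0") (auto simp: mult_nonpos_nonneg mult_left_le power_le_one)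
  then show "0 < 1 - a * q ^ k" using assms by linarith
qed

lemma qpoch_self_pos: "0 \<le> q \<Longrightarrow> q < 1 \<Longrightarrow> 0 < qpoch q q n"
  by (rule qpoch_pos) auto

lemma one_minus_mult_power_pos:
  fixes a q :: real
  assumes "0 \<le> q" "q \<le> 1" "a < 1"
  shows "0 < 1 - a * q ^ k"
  using qpoch_pos[OF assms, of "Suc k"] qpoch_pos[OF assms, of k]
  by (simp add: qpoch_Suc zero_less_mult_iff)

lemma pq_less_1: "0 < q \<Longrightarrow> q < 1 \<Longrightarrow> p < 1 \<Longrightarrow> p * q < (1::real)"
  using one_minus_mult_power_pos[of q p 1] by simp

(* qbinom q n k is junk for k > n (truncated subtraction); gbinom extends it by zero, so that
   coefficient sums may run past the degree. *)
definition gbinom :: "real \<Rightarrow> nat \<Rightarrow> nat \<Rightarrow> real" where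
  "gbinom q n k = (if k \<le> n then qbinom q n k else 0)"

lemma gbinom_eq:
  assumes "0 \<le> q" "q < 1" "k \<le> n"
  shows "gbinom q n k = qpoch q q n / (qpoch q q k * qpoch q q (n - k))"
  using assms by (simp add: gbinom_def qbinom_def)

lemma gbinom_diag [simp]: "0 \<le> q \<Longrightarrow> q < 1 \<Longrightarrow> gbinom q n n = 1"
  using qpoch_self_pos[of q n] by (simp add: gbinom_def qbinom_def)

lemma gbinom_0 [simp]: "0 \<le> q \<Longrightarrow> q < 1 \<Longrightarrow> gbinom q n 0 = 1"
  using qpoch_self_pos[of q n] by (simp add: gbinom_def qbinom_def)

lemma gbinom_Suc_diag:
  assumes "0 \<le> q" "q < 1"
  shows "gbinom q (Suc n) n = (1 - q^(Suc n)) / (1 - q)"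
  using assms qpoch_self_pos[of q n] by (simp add: gbinom_eq qpoch_Suc)

lemma gbinom_identity_interior:
  fixes q p :: real
  assumes q: "0 < q" "q < 1" and j: "Suc j \<le> n"
  shows "(1 - p*q^(Suc n)) * gbinom q (Suc (Suc n)) (Suc j) =
    (1 - p*q^j) * q^(2*(Suc n - j)) * gbinom q (Suc n) j
    + (1 + q - q^(Suc (Suc n)) - p*q^(Suc n)) * gbinom q (Suc n) (Suc j)
    - q * (1 - q^(Suc n)) * gbinom q n (Suc j)"
proof -
  have nz: "1 - q * q ^ i \<noteq> 0" for i
    using q power_less_one_iff[of q "Suc i"] by simp
  obtain m where n: "n = Suc (j + m)" using j by (metis less_eq_Suc_le less_imp_Suc_add)
  define X Y where "X = q ^ j" and "Y = q ^ m"
  define a b c where "a = 1 - q * X" and "b = 1 - q * Y" and "c = 1 - q * q * Y"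
  define K where "K = qpoch q q n / (qpoch q q j * qpoch q q m)"
  have qn: "q ^ n = q * X * Y" unfolding n X_def Y_def by (simp add: power_add)
  have abc: "a \<noteq> 0" "b \<noteq> 0" "c \<noteq> 0"
    unfolding a_def b_def c_def X_def Y_def using nz[of j] nz[of m] nz[of "Suc m"]
    by (simp_all add: mult.assoc)
  have "Suc (Suc n) - Suc j = Suc (Suc m)" "Suc n - j = Suc (Suc m)" "Suc n - Suc j = Suc m"
    "n - Suc j = m" using n by simp_all
  then have T: "gbinom q (Suc (Suc n)) (Suc j) = K * (1-q*q*X*Y) * (1-q*q*q*X*Y) / (a*b*c)"
    and A: "gbinom q (Suc n) j = K * (1-q*q*X*Y) / (b*c)"
    and B: "gbinom q (Suc n) (Suc j) = K * (1-q*q*X*Y) / (a*b)"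
    and C: "gbinom q n (Suc j) = K / a"
    using j q
    by (simp_all add: gbinom_eq qpoch_Suc qn X_def Y_def a_def b_def c_def K_def mult_ac)
  define L where "L = K * (1-q*q*X*Y) / (a*b*c)"
  have TL: "gbinom q (Suc (Suc n)) (Suc j) = L * (1-q*q*q*X*Y)"
    unfolding T L_def by simp
  have AL: "gbinom q (Suc n) j = L * a" and BL: "gbinom q (Suc n) (Suc j) = L * c"
    and CL: "(1 - q*q*X*Y) * gbinom q n (Suc j) = L * (b * c)"
    unfolding A B C L_def using abc by (simp_all add: field_simps)
  have pw: "q^(2*(Suc n - j)) = q^4*Y^2"
    unfolding Y_def n by (simp flip: power_mult add: power_add mult.commute power4_eq_xxxx)
  have poly: "(1-p*(q*q*X*Y))*(1-q*q*q*X*Y) = (1-p*X)*(q^4*Y^2)*a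
      + (1 + q - q*q*q*X*Y - p*q*q*X*Y)*c - q*b*c"
    unfolding a_def b_def c_def by (simp add: algebra_simps power2_eq_square power4_eq_xxxx)
  show ?thesis
    unfolding TL AL BL pw power_Suc qn X_def[symmetric] using poly CL by algebra
qed

(* The recurrence SW_Suc_Suc, read off coefficientwise. *)
lemma gbinom_identity:
  fixes q p :: real
  assumes q: "0 < q" "q < 1" and j: "j \<le> Suc n"
  shows "(1 - p*q^(Suc n)) * gbinom q (Suc (Suc n)) (Suc j) =
    (1 - p*q^j) * q^(2*(Suc n - j)) * gbinom q (Suc n) j
    + (1 + q - q^(Suc (Suc n)) - p*q^(Suc n)) * gbinom q (Suc n) (Suc j)
    - q * (1 - q^(Suc n)) * gbinom q n (Suc j)"
proof -
  consider "Suc j \<le> n" | "j = n" | "j = Suc n" using j by linarith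
  then show ?thesis
  proof cases
    case 1
    then show ?thesis by (rule gbinom_identity_interior[OF q])
  next
    case 2
    have "gbinom q n (Suc n) = 0" by (simp add: gbinom_def)
    then show ?thesis
      using q unfolding 2 gbinom_Suc_diag[OF less_imp_le[OF q(1)] q(2)]
      by (simp add: field_simps power2_eq_square)
  next
    case 3
    have "gbinom q (Suc n) (Suc (Suc n)) = 0" "gbinom q n (Suc (Suc n)) = 0"
      by (simp_all add: gbinom_def)
    then show ?thesis using q unfolding 3 by simp
  qed
qed

section \<open>The three-term recurrence of the Stieltjes--Wigert polynomials\<close>

definition sw_scale :: "real \<Rightarrow> nat \<Rightarrow> real" where
  "sw_scale q n = (-1) ^ n / (q ^ (n^2) * sqrt q ^ n)"

definition sw_weight :: "real \<Rightarrow> real \<Rightarrow> nat \<Rightarrow> real" where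
  "sw_weight p q k = q ^ (k^2) * (- sqrt q) ^ k / qpoch p q k"

definition sw_coeff :: "real \<Rightarrow> real \<Rightarrow> nat \<Rightarrow> nat \<Rightarrow> real" where
  "sw_coeff p q n k = sw_scale q n * qpoch p q n * gbinom q n k * sw_weight p q k"

lemma powr_SW_exponent:
  assumes "0 < q"
  shows "q powr (- (real n * (real n + 1/2))) = 1 / (q ^ (n^2) * sqrt q ^ n)"
proof -
  have "sqrt q ^ n = q powr (real n * (1/2))"
    using assms by (simp add: powr_half_sqrt [symmetric] powr_power)
  then have "q ^ (n^2) * sqrt q ^ n = q powr (real (n^2)) * q powr (real n * (1/2))"
    by (simp only: powr_realpow[OF assms])
  also have "\<dots> = q powr (real (n^2) + real n * (1/2))"
    by (rule powr_add [symmetric])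
  also have "real (n^2) + real n * (1/2) = real n * (real n + 1/2)"
    by (simp add: power2_eq_square algebra_simps)
  finally show ?thesis
    by (simp only: powr_minus_divide)
qed

lemma SW_eq_sum:
  assumes "0 < q" "q < 1" "n \<le> N"
  shows "SW n x p q = (\<Sum>k\<le>N. sw_coeff p q n k * x ^ k)"
proof -
  have "SW n x p q = (\<Sum>k\<le>n. sw_coeff p q n k * x ^ k)"
    unfolding SW_def powr_SW_exponent[OF assms(1)] sum_distrib_left
    by (intro sum.cong) (simp_all add: sw_coeff_def sw_scale_def sw_weight_def gbinom_def
        power_mult_distrib [symmetric])
  also have "\<dots> = (\<Sum>k\<le>N. sw_coeff p q n k * x ^ k)"
    using assms(3) by (intro sum.mono_neutral_left) (auto simp: sw_coeff_def gbinom_def)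
  finally show ?thesis .
qed

lemma sw_coeff_diag:
  assumes "0 < q" "q < 1" "p < 1"
  shows "sw_coeff p q n n = 1"
  using assms qpoch_pos[of q p n]
  by (simp add: sw_coeff_def sw_scale_def sw_weight_def power_mult_distrib [symmetric])

lemma sw_scale_Suc: "0 < q \<Longrightarrow> sw_scale q (Suc n) = - sw_scale q n / (q ^ (2*n+1) * sqrt q)"
  by (simp add: sw_scale_def power2_eq_square power_add power_mult field_simps)

lemma sw_weight_Suc:
  "0 < q \<Longrightarrow> 1 - p * q ^ k \<noteq> 0 \<Longrightarrow>
    sw_weight p q (Suc k) = - sw_weight p q k * q ^ (2*k+1) * sqrt q / (1 - p * q ^ k)"
  by (simp add: sw_weight_def qpoch_Suc power2_eq_square power_add power_mult field_simps)

definition sw_c :: "real \<Rightarrow> real \<Rightarrow> nat \<Rightarrow> real" where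
  "sw_c p q n = (1 - q ^ n) / (sqrt q * q ^ (2*n)) + (1 - p * q ^ n) / (sqrt q * q ^ (2*n+1))"

definition sw_lambda :: "real \<Rightarrow> real \<Rightarrow> nat \<Rightarrow> real" where
  "sw_lambda p q n = (1 - q ^ Suc n) * (1 - p * q ^ n) / q ^ (4*n+4)"

lemma sw_coeff_Suc_shift:
  assumes q: "0 < q" "q < 1" and p: "p < 1" and j: "j \<le> Suc n"
  shows "sw_coeff p q (Suc n) j = sw_scale q n * qpoch p q n * (1 - p * q ^ n)
    * sw_weight p q (Suc j) / q ^ (4*n+5) * (1 - p * q ^ j) * q ^ (2 * (Suc n - j))
    * gbinom q (Suc n) j"
proof -
  have nz: "1 - p * q ^ i \<noteq> 0" for i
    using one_minus_mult_power_pos[of q p i] q p by simp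
  have sq: "sqrt q * (sqrt q * x) = q * x" for x
    using q by (simp flip: mult.assoc)
  have "4*n+5 = Suc ((2*n+1) + (2*j+1) + 2*(Suc n - j))" using j by simp
  then have "q ^ (4*n+5) = q * q ^ (2*n+1) * q ^ (2*j+1) * q ^ (2*(Suc n - j))"
    by (simp only: power_add power_Suc mult.assoc)
  then show ?thesis
    using q nz[of j] unfolding sw_coeff_def sw_scale_Suc[OF q(1)] sw_weight_Suc[OF q(1) nz] qpoch_Suc
    by (simp add: field_simps sq)
qed

lemma sw_coeff_rec:
  assumes q: "0 < q" "q < 1" and p: "p < 1" and k: "k \<le> Suc (Suc n)"
  shows "sw_coeff p q (Suc (Suc n)) k =
    (if k = 0 then 0 else sw_coeff p q (Suc n) (k - 1))
    - sw_c p q (Suc n) * sw_coeff p q (Suc n) k - sw_lambda p q n * sw_coeff p q n k"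
proof -
  define Q where "Q = q ^ n"
  have pw: "q ^ (2*n+1) = q * Q * Q" "q ^ (4*n+5) = q * q * q * q * q * Q * Q * Q * Q"
    "q ^ (4*n+4) = q * q * q * q * Q * Q * Q * Q"
    "q ^ Suc n = q * Q" "q ^ Suc (Suc n) = q * q * Q" "q ^ (2 * Suc n) = q * q * Q * Q"
    "q ^ (2 * Suc n + 1) = q * q * q * Q * Q"
    unfolding Q_def by (simp_all add: power_add power_mult power2_eq_square power4_eq_xxxx
      numeral_eq_Suc)
  have pos: "0 < Q" "0 < sqrt q" unfolding Q_def using q by simp_all
  have sq: "sqrt q * (sqrt q * x) = q * x" for x
    using q by (simp flip: mult.assoc)
  \<comment> \<open>Each of the four terms is a multiple of V times a Gaussian binomial, so the claim
    reduces to gbinom_identity.\<close>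
  define V where "V i = sw_scale q n * qpoch p q n * (1 - p * q ^ n) * sw_weight p q i / q ^ (4*n+5)"
    for i
  have top: "sw_coeff p q (Suc (Suc n)) k = V k * (1 - p * q ^ Suc n) * gbinom q (Suc (Suc n)) k"
    using q unfolding sw_coeff_def V_def sw_scale_Suc[OF q(1)] qpoch_Suc pw Q_def[symmetric]
    by (simp add: field_simps sq)
  have mid: "sw_c p q (Suc n) * sw_coeff p q (Suc n) k
      = - V k * (1 + q - q ^ Suc (Suc n) - p * q ^ Suc n) * gbinom q (Suc n) k"
    using q pos unfolding sw_coeff_def V_def sw_c_def sw_scale_Suc[OF q(1)] qpoch_Suc pw Q_def[symmetric]
    by (simp add: field_simps sq)
  have low: "sw_lambda p q n * sw_coeff p q n k = V k * q * (1 - q ^ Suc n) * gbinom q n k"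
    using q pos unfolding sw_coeff_def V_def sw_lambda_def pw Q_def[symmetric]
    by (simp add: field_simps)
  have shift: "sw_coeff p q (Suc n) j
      = V (Suc j) * (1 - p * q ^ j) * q ^ (2 * (Suc n - j)) * gbinom q (Suc n) j"
    if "j \<le> Suc n" for j
    unfolding V_def using sw_coeff_Suc_shift[OF q p that] .
  show ?thesis
  proof (cases k)
    case 0
    then show ?thesis using q unfolding top mid low by (simp add: algebra_simps)
  next
    case (Suc j)
    then have j: "j \<le> Suc n" using k by simp
    from arg_cong[OF gbinom_identity[OF q j], of "\<lambda>t. V (Suc j) * t" p] show ?thesis
      unfolding top mid low unfolding Suc by (simp add: shift[OF j] algebra_simps)
  qed
qed
lemma SW_Suc_Suc:
  assumes q: "0 < q" "q < 1" and p: "p < 1"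
  shows "SW (Suc (Suc n)) x p q
    = (x - sw_c p q (Suc n)) * SW (Suc n) x p q - sw_lambda p q n * SW n x p q"
proof -
  let ?N = "Suc (Suc n)"
  have "x * SW (Suc n) x p q = (\<Sum>k\<le>Suc n. sw_coeff p q (Suc n) k * x ^ Suc k)"
    unfolding SW_eq_sum[OF q order_refl] sum_distrib_left by (simp add: mult_ac)
  also have "\<dots> = (\<Sum>k\<le>?N. (if k = 0 then 0 else sw_coeff p q (Suc n) (k - 1)) * x ^ k)"
    by (simp only: sum.atMost_Suc_shift) simp
  finally have shift: "x * SW (Suc n) x p q = \<dots>" .
  have "SW ?N x p q = (\<Sum>k\<le>?N. ((if k = 0 then 0 else sw_coeff p q (Suc n) (k - 1))
      - sw_c p q (Suc n) * sw_coeff p q (Suc n) k - sw_lambda p q n * sw_coeff p q n k) * x ^ k)"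
    unfolding SW_eq_sum[OF q order_refl] by (intro sum.cong refl) (simp add: sw_coeff_rec[OF q p])
  also have "\<dots> = (\<Sum>k\<le>?N. (if k = 0 then 0 else sw_coeff p q (Suc n) (k - 1)) * x ^ k)
      - sw_c p q (Suc n) * (\<Sum>k\<le>?N. sw_coeff p q (Suc n) k * x ^ k)
      - sw_lambda p q n * (\<Sum>k\<le>?N. sw_coeff p q n k * x ^ k)"
    by (simp add: sum_subtractf sum_distrib_left left_diff_distrib mult.assoc del: sum.atMost_Suc)
  also have "\<dots> = x * SW (Suc n) x p q - sw_c p q (Suc n) * SW (Suc n) x p q
      - sw_lambda p q n * SW n x p q"
    using shift SW_eq_sum[OF q, of "Suc n" ?N] SW_eq_sum[OF q, of n ?N] by simp
  finally show ?thesis by (simp add: algebra_simps)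
qed

lemma SW_0 [simp]: "0 < q \<Longrightarrow> SW 0 x p q = 1"
  by (simp add: SW_def qbinom_def)

lemma SW_1:
  assumes "0 < q" "q < 1" "p < 1"
  shows "SW 1 x p q = x - sw_c p q 0"
proof -
  have "sw_coeff p q 1 1 = 1" "sw_coeff p q 1 0 = - sw_c p q 0"
    using assms by (simp_all add: sw_coeff_def sw_scale_def sw_weight_def sw_c_def qpoch_Suc
        field_simps)
  then show ?thesis
    unfolding SW_eq_sum[OF assms(1,2) order_refl] by simp
qed

section \<open>Kernel polynomials\<close>

definition kern_d :: "real \<Rightarrow> real \<Rightarrow> nat \<Rightarrow> real" where
  "kern_d p q n = (1 + q - (1 + p) * q ^ n) / (sqrt q * q ^ (2*n))"

(* kern_nu p q n is nu_(n+1), so that beta_n = kern_nu p q n / (d_n d_(n+1)). *)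
definition kern_nu :: "real \<Rightarrow> real \<Rightarrow> nat \<Rightarrow> real" where
  "kern_nu p q n = (1 - q ^ n) * (1 - p * q ^ n) / q ^ (4*n+2)"

lemma kern_eq_sum:
  assumes "0 < q" "q < 1"
  shows "kern p q n x = (\<Sum>k\<le>n. (sw_coeff (p*q) q n k * q ^ k / q ^ n) * x ^ k)"
  unfolding kern_def SW_eq_sum[OF assms order_refl] sum_divide_distrib power_mult_distrib
  by (simp add: mult_ac)

lemma kern_0 [simp]: "0 < q \<Longrightarrow> kern p q 0 x = 1"
  by (simp add: kern_def)

lemma kern_1:
  assumes "0 < q" "q < 1" "p < 1"
  shows "kern p q 1 x = x - kern_d p q 1"
  using assms SW_1[OF assms(1,2) pq_less_1[OF assms]]
  by (simp add: kern_def kern_d_def sw_c_def field_simps)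

lemma kern_Suc_Suc:
  assumes q: "0 < q" "q < 1" and p: "p < 1"
  shows "kern p q (Suc (Suc n)) x
    = (x - kern_d p q (Suc (Suc n))) * kern p q (Suc n) x - kern_nu p q (Suc n) * kern p q n x"
proof -
  have "sw_c (p*q) q (Suc n) = q * kern_d p q (Suc (Suc n))"
    using q by (simp add: sw_c_def kern_d_def power_add field_simps)
  moreover have "sw_lambda (p*q) q n = q^2 * kern_nu p q (Suc n)"
    using q by (simp add: sw_lambda_def kern_nu_def power_add field_simps)
  ultimately show ?thesis
    using q unfolding kern_def SW_Suc_Suc[OF q pq_less_1[OF q p]]
    by (simp add: field_simps power2_eq_square)
qed
lemma consecutive_degree_lincomb_eq_0:
  fixes a b :: real and f g :: "nat \<Rightarrow> real"
  assumes zero: "\<And>x. a * (\<Sum>k\<le>Suc m. f k * x ^ k) + b * (\<Sum>k\<le>m. g k * x ^ k) = 0"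
    and "f (Suc m) \<noteq> 0" "g m \<noteq> 0"
  shows "a = 0 \<and> b = 0"
proof -
  define P where "P = (\<Sum>k\<le>Suc m. monom (a * f k) k) + (\<Sum>k\<le>m. monom (b * g k) k)"
  have "poly P x = 0" for x
    using zero[of x] unfolding P_def poly_add poly_sum poly_monom sum_distrib_left
    by (simp add: mult_ac del: sum.atMost_Suc)
  then have "P = 0" using poly_all_0_iff_0 by blast
  then have "coeff P (Suc m) = 0" "coeff P m = 0" by simp_all
  then show ?thesis
    using assms(2,3) by (simp add: P_def coeff_sum coeff_monom sum.delta)
qed

lemma kern_recurrence_coeffs:
  fixes d \<nu> :: "nat \<Rightarrow> real"
  assumes q: "0 < q" "q < 1" and p: "p < 1"
    and rec1: "\<forall>x. kern p q 1 x = (x - d 1) * kern p q 0 x"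
    and rec: "\<forall>n\<ge>2. \<forall>x. kern p q n x = (x - d n) * kern p q (n - 1) x - \<nu> n * kern p q (n - 2) x"
  shows "n \<ge> 1 \<Longrightarrow> d n = kern_d p q n" and "\<nu> (Suc (Suc m)) = kern_nu p q (Suc m)"
proof -
  have d1: "d 1 = kern_d p q 1"
    using rec1 kern_1[OF q p, of 0] q by simp
  have "kern_d p q (Suc (Suc m)) - d (Suc (Suc m)) = 0 \<and> kern_nu p q (Suc m) - \<nu> (Suc (Suc m)) = 0"
    for m
  proof (rule consecutive_degree_lincomb_eq_0)
    fix x
    have "(kern_d p q (Suc (Suc m)) - d (Suc (Suc m))) * kern p q (Suc m) x
        + (kern_nu p q (Suc m) - \<nu> (Suc (Suc m))) * kern p q m x = 0"
      using rec[rule_format, of "Suc (Suc m)" x] kern_Suc_Suc[OF q p, of m x] by (simp add: algebra_simps)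
    then show "(kern_d p q (Suc (Suc m)) - d (Suc (Suc m)))
          * (\<Sum>k\<le>Suc m. sw_coeff (p*q) q (Suc m) k * q ^ k / q ^ Suc m * x ^ k)
        + (kern_nu p q (Suc m) - \<nu> (Suc (Suc m)))
          * (\<Sum>k\<le>m. sw_coeff (p*q) q m k * q ^ k / q ^ m * x ^ k) = 0"
      by (simp only: kern_eq_sum[OF q])
  qed (use q sw_coeff_diag[OF q pq_less_1[OF q p]] in simp_all)
  then have dSS: "d (Suc (Suc m)) = kern_d p q (Suc (Suc m))"
    and "\<nu> (Suc (Suc m)) = kern_nu p q (Suc m)" for m
    by simp_all
  then show "\<nu> (Suc (Suc m)) = kern_nu p q (Suc m)" by blast
  show "n \<ge> 1 \<Longrightarrow> d n = kern_d p q n"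
    using d1 dSS[of "n - 2"] by (cases "n = 1") (auto simp: numeral_2_eq_2 Suc_diff_Suc)
qed

section \<open>Infinite q-Pochhammer symbols and Delta\<close>

lemma qpoch_inf_convergent:
  fixes a q :: real
  assumes "\<bar>q\<bar> < 1"
  shows "convergent_prod (\<lambda>k. 1 - a * q ^ k)"
proof -
  have "summable (\<lambda>k. \<bar>a\<bar> * \<bar>q\<bar> ^ k)"
    using assms by (intro summable_mult summable_geometric) simp
  then have "summable (\<lambda>k. norm ((1 - a * q ^ k) - 1))"
    by (simp add: abs_mult power_abs)
  then show ?thesis
    by (intro abs_convergent_prod_imp_convergent_prod summable_imp_abs_convergent_prod)
qed

lemma qpoch_inf_LIMSEQ:
  "\<bar>q\<bar> < 1 \<Longrightarrow> (\<lambda>n. \<Prod>k\<le>n. 1 - a * q ^ k) \<longlonglongrightarrow> qpoch_inf a q"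
  unfolding qpoch_inf_def by (rule convergent_prod_LIMSEQ[OF qpoch_inf_convergent])

lemma qpoch_inf_unfold:
  assumes "\<bar>q\<bar> < 1"
  shows "qpoch_inf a q = (1 - a) * qpoch_inf (a * q) q"
proof -
  have "(\<lambda>k. 1 - (a * q) * q ^ k) has_prod qpoch_inf (a * q) q"
    unfolding qpoch_inf_def by (intro convergent_prod_has_prod qpoch_inf_convergent assms)
  then have "(\<lambda>k. 1 - a * q ^ Suc k) has_prod qpoch_inf (a * q) q"
    by (simp add: mult_ac)
  from has_prod_Suc_imp[OF this] show ?thesis
    unfolding qpoch_inf_def by (simp add: has_prod_iff mult.commute)
qed

lemma qpoch_inf_unfold_power:
  "\<bar>q\<bar> < 1 \<Longrightarrow> qpoch_inf (c * q ^ n) q = (1 - c * q ^ n) * qpoch_inf (c * q ^ Suc n) q"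
  using qpoch_inf_unfold[of q "c * q ^ n"] by (simp add: mult_ac)

context
  fixes q :: real
  assumes q: "0 < q" "q < 1"
begin

lemma qpoch_inf_factor_bounds:
  "0 \<le> a \<Longrightarrow> a \<le> 1 \<Longrightarrow> 0 \<le> 1 - a * q ^ k \<and> 1 - a * q ^ k \<le> 1"
  using q mult_mono[of a 1 "q ^ k" 1] by (simp add: power_le_one)

lemma qpoch_inf_le_1: "0 \<le> a \<Longrightarrow> a \<le> 1 \<Longrightarrow> qpoch_inf a q \<le> 1"
  using q qpoch_inf_factor_bounds
  by (intro LIMSEQ_le_const2[OF qpoch_inf_LIMSEQ]) (auto intro!: prod_le_1)

lemma qpoch_inf_ge:
  assumes "0 \<le> a" "a \<le> 1"
  shows "1 - a / (1 - q) \<le> qpoch_inf a q"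
proof (rule LIMSEQ_le_const[OF qpoch_inf_LIMSEQ], use q in simp, intro exI allI impI)
  fix n
  have "(\<Sum>k\<le>n. a * q ^ k) = a * (1 - q ^ Suc n) / (1 - q)"
    using q unfolding sum_distrib_left [symmetric] lessThan_Suc_atMost [symmetric] sum_gp_strict
    by simp
  also have "\<dots> \<le> a / (1 - q)"
    using q assms by (intro divide_right_mono) (auto simp: mult_left_le)
  finally have "1 - a / (1 - q) \<le> 1 - (\<Sum>k\<le>n. a * q ^ k)" by simp
  also have "\<dots> \<le> (\<Prod>k\<le>n. 1 - a * q ^ k)"
    using qpoch_inf_factor_bounds[OF assms] by (intro Weierstrass_prod_ineq) auto
  finally show "1 - a / (1 - q) \<le> (\<Prod>k\<le>n. 1 - a * q ^ k)" .
qed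

lemma qpoch_inf_antimono:
  assumes "0 \<le> a" "a \<le> b" "b \<le> 1"
  shows "qpoch_inf b q \<le> qpoch_inf a q"
  unfolding qpoch_inf_def
proof (rule prodinf_le)
  show "(\<lambda>k. 1 - b * q ^ k) has_prod (\<Prod>k. 1 - b * q ^ k)"
    and "(\<lambda>k. 1 - a * q ^ k) has_prod (\<Prod>k. 1 - a * q ^ k)"
    using q by (simp_all add: convergent_prod_has_prod qpoch_inf_convergent)
  show "0 \<le> 1 - b * q ^ k \<and> 1 - b * q ^ k \<le> 1 - a * q ^ k" for k
    using assms q qpoch_inf_factor_bounds[of b k] by (auto intro: mult_right_mono)
qed

lemma qpoch_inf_pos:
  assumes "0 \<le> a" "a < 1"
  shows "0 < qpoch_inf a q"
proof -
  have "1 - a * q ^ k \<noteq> 0" for k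
    using one_minus_mult_power_pos[of q a k] q assms by simp
  then have "qpoch_inf a q \<noteq> 0"
    unfolding qpoch_inf_def using q by (intro prodinf_nonzero qpoch_inf_convergent) auto
  moreover have "0 \<le> qpoch_inf a q"
    using q qpoch_inf_factor_bounds assms
    by (intro LIMSEQ_le_const[OF qpoch_inf_LIMSEQ]) (auto intro!: prod_nonneg)
  ultimately show ?thesis by simp
qed

end

context
  fixes p q :: real
  assumes q: "0 < q" "q < 1" and p: "0 \<le> p" "p < 1"
begin

lemma pq_power_bounds: "0 < q ^ n" "q ^ n \<le> 1" "q ^ Suc n < 1" "p * q ^ n \<le> q ^ n" "p * q ^ n < 1"
  using q p one_minus_mult_power_pos[of q p n] power_Suc_less_one[of q n]
  by (auto simp: power_le_one mult_left_le_one_le)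

lemma Delta_pos: "0 < Delta p q n"
proof -
  define A B where "A = qpoch_inf (p * q ^ Suc n) q" and "B = qpoch_inf (q ^ Suc n) q"
  have "B \<le> A" "0 < A"
    unfolding A_def B_def using q p pq_power_bounds[of "Suc n"]
    by (auto intro: qpoch_inf_antimono qpoch_inf_pos)
  then have "(1 - q ^ n) * B \<le> (1 - q ^ n) * A"
    using pq_power_bounds by (intro mult_left_mono) auto
  moreover have "(1 - q ^ n) * A < (1 - p * q ^ n) * A"
    using \<open>0 < A\<close> q p by (intro mult_strict_right_mono) auto
  moreover have "Delta p q n = (1 - p * q ^ n) * A - (1 - q ^ n) * B"
    unfolding Delta_def A_def B_def using q
    by (simp add: qpoch_inf_unfold_power qpoch_inf_unfold_power[of q 1, simplified])
  ultimately show ?thesis by linarith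
qed

lemma Delta_le: "Delta p q n \<le> q ^ n / (1 - q)"
proof -
  have "qpoch_inf (p * q ^ n) q \<le> 1"
    using p pq_power_bounds[of n] by (intro qpoch_inf_le_1[OF q]) auto
  moreover have "1 - q ^ n / (1 - q) \<le> qpoch_inf (q ^ n) q"
    using pq_power_bounds[of n] by (intro qpoch_inf_ge[OF q]) auto
  ultimately show ?thesis unfolding Delta_def by linarith
qed

lemma Delta_rec:
  "(1 + q - (1 + p) * q ^ Suc n) * Delta p q (Suc n) - q * Delta p q n
    = (1 - q ^ Suc n) * (1 - p * q ^ Suc n) * Delta p q (Suc (Suc n))"
proof -
  have unf: "qpoch_inf (c * q ^ m) q = (1 - c * q ^ m) * qpoch_inf (c * q ^ Suc m) q" for c m
    using q by (intro qpoch_inf_unfold_power) simp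
  have unf1: "qpoch_inf (q ^ m) q = (1 - q ^ m) * qpoch_inf (q ^ Suc m) q" for m
    using unf[of 1 m] by simp
  show ?thesis
    unfolding Delta_def unf[of p n] unf[of p "Suc n"] unf1[of n] unf1[of "Suc n"]
    by (simp add: algebra_simps)
qed

end

section \<open>The chain sequence and its parameter sequences\<close>

definition beta_seq :: "real \<Rightarrow> real \<Rightarrow> nat \<Rightarrow> real" where
  "beta_seq p q n = q * (1 - q ^ n) * (1 - p * q ^ n) /
     ((1 + q - (1 + p) * q ^ n) * (1 + q - (1 + p) * q ^ (n + 1)))"

definition h_seq :: "real \<Rightarrow> real \<Rightarrow> nat \<Rightarrow> real" where
  "h_seq p q n = q * (1 - p * q ^ n) / (1 + q - (1 + p) * q ^ (n + 1))"

definition min_seq :: "real \<Rightarrow> real \<Rightarrow> nat \<Rightarrow> real" where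
  "min_seq p q n = q * (1 - q ^ n) / (1 + q - (1 + p) * q ^ (n + 1))"

definition max_seq :: "real \<Rightarrow> real \<Rightarrow> nat \<Rightarrow> real" where
  "max_seq p q n = q / (1 + q - (1 + p) * q ^ (n + 1)) * (Delta p q n / Delta p q (n + 1))"

definition chain_weight :: "real \<Rightarrow> real \<Rightarrow> nat \<Rightarrow> real" where
  "chain_weight p q k = (1 + q - (1 + p) * q ^ Suc k) * Delta p q (Suc k) ^ 2"

lemma param_seqI:
  assumes "0 \<le> h 0" "\<And>n. 0 < h (Suc n)" "\<And>n. h n < 1"
    and "\<And>n. \<beta> (Suc n) = h (Suc n) * (1 - h n)"
  shows "param_seq \<beta> h"
  unfolding param_seq_def
proof (intro conjI allI impI)
  fix n :: nat assume "1 \<le> n"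
  then obtain k where "n = Suc k" by (cases n) auto
  then show "0 < h n" "\<beta> n = h n * (1 - h (n - 1))" using assms by simp_all
qed (use assms in auto)

lemma param_seq_cong: "(\<And>n. n \<ge> 1 \<Longrightarrow> \<beta> n = \<beta>' n) \<Longrightarrow> param_seq \<beta> = param_seq \<beta>'"
  unfolding param_seq_def by (intro ext) auto

context
  fixes p q :: real
  assumes q: "0 < q" "q < 1" and p: "0 \<le> p" "p < 1"
begin

lemma chain_den_pos: "0 < 1 + q - (1 + p) * q ^ Suc n"
proof -
  have "(1 + p) * q ^ Suc n \<le> (1 + p) * q"
    using q p by (intro mult_left_mono) (auto simp: power_le_one)
  moreover have "p * q < 1" using q p by (simp add: pq_less_1)
  ultimately show ?thesis by (simp add: algebra_simps)
qed

lemma one_minus_h_seq: "1 - h_seq p q k = (1 - q ^ Suc k) / (1 + q - (1 + p) * q ^ Suc k)"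
  using chain_den_pos[of k] by (simp add: h_seq_def field_simps)

lemma one_minus_min_seq: "1 - min_seq p q k = (1 - p * q ^ Suc k) / (1 + q - (1 + p) * q ^ Suc k)"
  using chain_den_pos[of k] by (simp add: min_seq_def field_simps)

lemma one_minus_max_seq:
  "1 - max_seq p q k = (1 - q ^ Suc k) * (1 - p * q ^ Suc k) * Delta p q (Suc (Suc k))
    / Delta p q (Suc k) / (1 + q - (1 + p) * q ^ Suc k)"
proof -
  define X where "X = Delta p q (Suc k) * (1 + q - (1 + p) * q ^ Suc k)"
  have "0 < X" unfolding X_def using chain_den_pos[of k] Delta_pos[OF q p] by simp
  have "max_seq p q k = q * Delta p q k / X" by (simp add: max_seq_def X_def)
  then have "1 - max_seq p q k = (X - q * Delta p q k) / X"
    using \<open>0 < X\<close> by (simp add: field_simps)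
  then show ?thesis
    unfolding divide_divide_eq_left X_def by (simp only: mult.commute[of "Delta p q (Suc k)"] Delta_rec[OF q p])
qed

lemma chain_seq_Suc_mult:
  assumes "f (Suc k) = q * a / (1 + q - (1 + p) * q ^ Suc (Suc k))"
    and "1 - f k = b / (1 + q - (1 + p) * q ^ Suc k)"
    and "a * b = (1 - q ^ Suc k) * (1 - p * q ^ Suc k)"
  shows "f (Suc k) * (1 - f k) = beta_seq p q (Suc k)"
  unfolding beta_seq_def assms(1,2) mult.assoc[of q] assms(3)[symmetric] times_divide_times_eq
  by (simp add: ac_simps)

lemma h_seq_Suc_mult: "h_seq p q (Suc k) * (1 - h_seq p q k) = beta_seq p q (Suc k)"
  by (rule chain_seq_Suc_mult[OF _ one_minus_h_seq, where a = "1 - p * q ^ Suc k"])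
    (simp_all add: h_seq_def mult.commute)

lemma min_seq_Suc_mult: "min_seq p q (Suc k) * (1 - min_seq p q k) = beta_seq p q (Suc k)"
  by (rule chain_seq_Suc_mult[OF _ one_minus_min_seq, where a = "1 - q ^ Suc k"])
    (simp_all add: min_seq_def)

lemma max_seq_Suc_mult: "max_seq p q (Suc k) * (1 - max_seq p q k) = beta_seq p q (Suc k)"
proof (rule chain_seq_Suc_mult[OF _ one_minus_max_seq])
  show "max_seq p q (Suc k) = q * (Delta p q (Suc k) / Delta p q (Suc (Suc k)))
      / (1 + q - (1 + p) * q ^ Suc (Suc k))"
    by (simp add: max_seq_def)
  show "Delta p q (Suc k) / Delta p q (Suc (Suc k)) * ((1 - q ^ Suc k) * (1 - p * q ^ Suc k)
      * Delta p q (Suc (Suc k)) / Delta p q (Suc k)) = (1 - q ^ Suc k) * (1 - p * q ^ Suc k)"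
    using Delta_pos[OF q p, of "Suc k"] Delta_pos[OF q p, of "Suc (Suc k)"] by simp
qed

lemma h_seq_bounds: "0 < h_seq p q n" "h_seq p q n < 1"
proof -
  have "0 < 1 - h_seq p q n"
    unfolding one_minus_h_seq using chain_den_pos[of n] pq_power_bounds[OF q p, of n]
    by (intro divide_pos_pos) auto
  then show "h_seq p q n < 1" by simp
  show "0 < h_seq p q n"
    unfolding h_seq_def using chain_den_pos[of n] pq_power_bounds[OF q p, of n] q by simp
qed

lemma min_seq_bounds: "0 < min_seq p q (Suc n)" "min_seq p q n < 1"
proof -
  have "0 < 1 - min_seq p q n"
    unfolding one_minus_min_seq using chain_den_pos[of n] pq_power_bounds[OF q p, of "Suc n"]
    by (intro divide_pos_pos) auto
  then show "min_seq p q n < 1" by simp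
  show "0 < min_seq p q (Suc n)"
    unfolding min_seq_def using chain_den_pos[of "Suc n"] pq_power_bounds[OF q p, of n] q by simp
qed

lemma max_seq_bounds: "0 < max_seq p q n" "max_seq p q n < 1"
proof -
  have "0 < 1 - max_seq p q n"
    unfolding one_minus_max_seq
    using chain_den_pos[of n] pq_power_bounds[OF q p, of n] pq_power_bounds[OF q p, of "Suc n"]
      Delta_pos[OF q p] by (intro divide_pos_pos mult_pos_pos) auto
  then show "max_seq p q n < 1" by simp
  show "0 < max_seq p q n"
    unfolding max_seq_def using chain_den_pos[of n] Delta_pos[OF q p] q by simp
qed

lemma param_seq_h_seq: "param_seq (beta_seq p q) (h_seq p q)"
  using h_seq_bounds by (intro param_seqI less_imp_le) (simp_all add: h_seq_Suc_mult)

lemma param_seq_min_seq: "param_seq (beta_seq p q) (min_seq p q)"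
  by (rule param_seqI) (simp_all add: min_seq_bounds min_seq_Suc_mult min_seq_def[of p q 0])

lemma param_seq_max_seq: "param_seq (beta_seq p q) (max_seq p q)"
  using max_seq_bounds by (intro param_seqI less_imp_le) (simp_all add: max_seq_Suc_mult)

lemma chain_weight_pos: "0 < chain_weight p q k"
  unfolding chain_weight_def using chain_den_pos[of k] Delta_pos[OF q p, of "Suc k"] by simp

lemma chain_weight_le: "chain_weight p q k \<le> 2 * (q ^ Suc k / (1 - q)) ^ 2"
  unfolding chain_weight_def
proof (rule mult_mono)
  have "0 \<le> (1 + p) * q ^ Suc k" using q p by simp
  then show "1 + q - (1 + p) * q ^ Suc k \<le> 2" using q by linarith
  show "Delta p q (Suc k) ^ 2 \<le> (q ^ Suc k / (1 - q)) ^ 2"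
    using Delta_pos[OF q p, of "Suc k"] Delta_le[OF q p, of "Suc k"] by (intro power_mono) auto
qed simp_all

lemma max_seq_growth:
  "q * chain_weight p q k * (1 - max_seq p q k) \<le> chain_weight p q (Suc k) * max_seq p q (Suc k)"
proof -
  define X0 X1 where "X0 = 1 + q - (1 + p) * q ^ Suc k" and "X1 = 1 + q - (1 + p) * q ^ Suc (Suc k)"
  define E where "E = (1 - q ^ Suc k) * (1 - p * q ^ Suc k)"
  have pos: "0 < X0" "0 < X1" "0 < Delta p q (Suc k)" "0 < Delta p q (Suc (Suc k))"
    using chain_den_pos[of k] chain_den_pos[of "Suc k"] Delta_pos[OF q p]
    by (simp_all add: X0_def X1_def)
  have "0 \<le> E" "E \<le> 1"
    unfolding E_def using pq_power_bounds[OF q p, of k] pq_power_bounds[OF q p, of "Suc k"] p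
    by (auto intro: mult_le_one)
  have "q * chain_weight p q k * (1 - max_seq p q k)
      = E * (q * Delta p q (Suc k) * Delta p q (Suc (Suc k)))"
    unfolding chain_weight_def one_minus_max_seq E_def[symmetric] X0_def[symmetric]
    using pos by (simp add: field_simps power2_eq_square)
  also have "\<dots> \<le> q * Delta p q (Suc k) * Delta p q (Suc (Suc k))"
    using \<open>0 \<le> E\<close> \<open>E \<le> 1\<close> q pos by (intro mult_left_le_one_le) auto
  also have "\<dots> = chain_weight p q (Suc k) * max_seq p q (Suc k)"
  proof -
    have "max_seq p q (Suc k) = q * Delta p q (Suc k) / (X1 * Delta p q (Suc (Suc k)))"
      by (simp add: max_seq_def X1_def)
    then show ?thesis
      unfolding chain_weight_def X1_def[symmetric] using pos by (simp add: field_simps power2_eq_square)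
  qed
  finally show ?thesis .
qed

lemma param_seq_excess_step:
  assumes g: "param_seq (beta_seq p q) g" and excess: "max_seq p q k < g k"
  shows "max_seq p q (Suc k) < g (Suc k)"
    and "q * chain_weight p q k * (g k - max_seq p q k)
      \<le> chain_weight p q (Suc k) * (g (Suc k) - max_seq p q (Suc k))"
proof -
  let ?M = "max_seq p q"
  have "g (Suc k) * (1 - g k) = ?M (Suc k) * (1 - ?M k)"
    using g max_seq_Suc_mult[of k] unfolding param_seq_def by simp
  then have key: "(g (Suc k) - ?M (Suc k)) * (1 - g k) = ?M (Suc k) * (g k - ?M k)"
    by (simp add: algebra_simps)
  have "g k < 1" using g unfolding param_seq_def by (cases k) auto
  then have u: "0 < 1 - g k" "1 - g k < 1 - ?M k" using excess by auto
  have "0 < (g (Suc k) - ?M (Suc k)) * (1 - g k)"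
    unfolding key using max_seq_bounds(1)[of "Suc k"] excess by simp
  then show pos: "?M (Suc k) < g (Suc k)"
    using u by (simp add: zero_less_mult_iff)
  have "q * chain_weight p q k * (1 - ?M k) * (g k - ?M k)
      \<le> chain_weight p q (Suc k) * (?M (Suc k) * (g k - ?M k))"
    using max_seq_growth[of k] excess by (simp add: mult.assoc mult_right_mono)
  also have "\<dots> \<le> chain_weight p q (Suc k) * ((g (Suc k) - ?M (Suc k)) * (1 - ?M k))"
    unfolding key[symmetric] using chain_weight_pos[of "Suc k"] pos u
    by (intro mult_left_mono) auto
  finally have "(q * chain_weight p q k * (g k - ?M k)) * (1 - ?M k)
      \<le> (chain_weight p q (Suc k) * (g (Suc k) - ?M (Suc k))) * (1 - ?M k)"
    by (simp add: ac_simps)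
  then show "q * chain_weight p q k * (g k - ?M k)
      \<le> chain_weight p q (Suc k) * (g (Suc k) - ?M (Suc k))"
    using max_seq_bounds(2)[of k] by (simp add: mult_le_cancel_right)
qed

lemma param_seq_excess_lower_bound:
  assumes g: "param_seq (beta_seq p q) g" and excess: "max_seq p q 0 < g 0"
  shows "max_seq p q k < g k"
    and "chain_weight p q 0 * (g 0 - max_seq p q 0) * q ^ k
      \<le> chain_weight p q k * (g k - max_seq p q k)"
proof -
  have "max_seq p q k < g k \<and> chain_weight p q 0 * (g 0 - max_seq p q 0) * q ^ k
      \<le> chain_weight p q k * (g k - max_seq p q k)"
  proof (induction k)
    case 0
    then show ?case using excess by simp
  next
    case (Suc k)
    then have "chain_weight p q 0 * (g 0 - max_seq p q 0) * q ^ Suc k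
        \<le> q * chain_weight p q k * (g k - max_seq p q k)"
      using q by (simp add: mult_left_mono mult_ac)
    also have "\<dots> \<le> chain_weight p q (Suc k) * (g (Suc k) - max_seq p q (Suc k))"
      using param_seq_excess_step(2)[OF g] Suc by blast
    finally show ?case using Suc param_seq_excess_step(1)[OF g] by blast
  qed
  then show "max_seq p q k < g k"
    and "chain_weight p q 0 * (g 0 - max_seq p q 0) * q ^ k
      \<le> chain_weight p q k * (g k - max_seq p q k)" by simp_all
qed

(* The excess g_k - M_k is at least a constant times q^k / chain_weight_k, and
   chain_weight_k = O(q^(2k)); so it would exceed 1 > g_k - M_k. *)
lemma max_seq_maximal:
  assumes g: "param_seq (beta_seq p q) g"
  shows "g 0 \<le> max_seq p q 0"
proof (rule ccontr)
  assume "\<not> g 0 \<le> max_seq p q 0"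
  then have excess: "max_seq p q 0 < g 0" by simp
  define c where "c = chain_weight p q 0 * (g 0 - max_seq p q 0)"
  have "0 < c"
    using chain_weight_pos[of 0] excess by (simp add: c_def)
  define C where "C = c * (1 - q) ^ 2 / (2 * q ^ 2)"
  have "0 < C"
    using \<open>0 < c\<close> q by (simp add: C_def)
  then obtain k where k: "q ^ k < C"
    using real_arch_pow_inv q by blast
  have "1 < C / q ^ k"
    using k q by simp
  also have "C / q ^ k = c * q ^ k / (2 * (q ^ Suc k / (1 - q)) ^ 2)"
    using q by (simp add: C_def field_simps power2_eq_square)
  also have "\<dots> \<le> c * q ^ k / chain_weight p q k"
    using chain_weight_le[of k] chain_weight_pos[of k] \<open>0 < c\<close> q
    by (intro divide_left_mono) auto
  also have "\<dots> \<le> g k - max_seq p q k"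
    using param_seq_excess_lower_bound(2)[OF g excess, of k] chain_weight_pos[of k]
    by (simp add: c_def field_simps)
  finally have "1 < g k - max_seq p q k" .
  moreover have "g k < 1"
    using g unfolding param_seq_def by (cases k) auto
  ultimately show False
    using max_seq_bounds(1)[of k] by simp
qed

lemma kern_nu_div_kern_d_eq_beta_seq:
  assumes "n \<ge> 1"
  shows "kern_nu p q n / (kern_d p q n * kern_d p q (Suc n)) = beta_seq p q n"
proof -
  define X0 X1 where "X0 = 1 + q - (1 + p) * q ^ n" and "X1 = 1 + q - (1 + p) * q ^ Suc n"
  define Q where "Q = q ^ (2 * n)"
  have pos: "0 < X0" "0 < X1" "0 < Q"
    using chain_den_pos[of "n - 1"] chain_den_pos[of n] assms q by (simp_all add: X0_def X1_def Q_def)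
  have "kern_d p q n = X0 / (sqrt q * Q)" "kern_d p q (Suc n) = X1 / (sqrt q * (Q * q * q))"
    "kern_nu p q n = (1 - q ^ n) * (1 - p * q ^ n) / (Q * Q * q * q)"
    "beta_seq p q n = q * (1 - q ^ n) * (1 - p * q ^ n) / (X0 * X1)"
    by (simp_all add: kern_d_def kern_nu_def beta_seq_def X0_def X1_def Q_def mult_ac
        flip: power_add)
  then show ?thesis
    using pos q by (simp only:) (simp add: field_simps)
qed

lemma kern_recurrence_beta:
  fixes d \<nu> \<beta> :: "nat \<Rightarrow> real"
  assumes rec1: "\<forall>x. kern p q 1 x = (x - d 1) * kern p q 0 x"
    and rec: "\<forall>n\<ge>2. \<forall>x. kern p q n x = (x - d n) * kern p q (n - 1) x - \<nu> n * kern p q (n - 2) x"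
    and beta_def: "\<forall>n\<ge>1. \<beta> n = \<nu> (n + 1) / (d n * d (n + 1))"
    and "n \<ge> 1"
  shows "\<beta> n = beta_seq p q n"
proof -
  note coeffs = kern_recurrence_coeffs[OF q p(2) rec1 rec]
  have "Suc (Suc (n - 1)) = n + 1" "Suc (n - 1) = n" using \<open>n \<ge> 1\<close> by simp_all
  then have "\<nu> (n + 1) = kern_nu p q n" using coeffs(2)[of "n - 1"] by simp
  moreover have "d n = kern_d p q n" "d (n + 1) = kern_d p q (Suc n)"
    using coeffs(1) \<open>n \<ge> 1\<close> by simp_all
  ultimately show ?thesis using beta_def \<open>n \<ge> 1\<close> kern_nu_div_kern_d_eq_beta_seq by simp
qed

section \<open>Shell polynomials\<close>

lemma h_seq_kern_d_0: "h_seq p q 0 * kern_d p q 1 = sw_c p q 0"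
  using chain_den_pos[of 0] q by (simp add: h_seq_def kern_d_def sw_c_def field_simps)

lemma h_seq_kern_d_Suc:
  "(1 - h_seq p q n) * kern_d p q (Suc n) + h_seq p q (Suc n) * kern_d p q (Suc (Suc n))
    = sw_c p q (Suc n)"
proof -
  define X0 X1 where "X0 = 1 + q - (1 + p) * q ^ Suc n" and "X1 = 1 + q - (1 + p) * q ^ Suc (Suc n)"
  define Q where "Q = q ^ (2 * Suc n)"
  have pos: "0 < X0" "0 < X1" "0 < Q" "0 < sqrt q"
    using chain_den_pos[of n] chain_den_pos[of "Suc n"] q by (simp_all add: X0_def X1_def Q_def)
  have "1 - h_seq p q n = (1 - q ^ Suc n) / X0"
    unfolding X0_def by (rule one_minus_h_seq)
  moreover have "kern_d p q (Suc n) = X0 / (sqrt q * Q)"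
    "h_seq p q (Suc n) = q * (1 - p * q ^ Suc n) / X1"
    "kern_d p q (Suc (Suc n)) = X1 / (sqrt q * (Q * q * q))"
    "sw_c p q (Suc n) = (1 - q ^ Suc n) / (sqrt q * Q) + (1 - p * q ^ Suc n) / (sqrt q * (Q * q))"
    by (simp_all add: X0_def X1_def Q_def h_seq_def kern_d_def sw_c_def mult_ac)
  ultimately show ?thesis
    using pos q by (simp only:) (simp add: field_simps)
qed

lemma h_seq_kern_d_lambda:
  "(1 - h_seq p q n) * h_seq p q n * kern_d p q (Suc n) ^ 2 = sw_lambda p q n"
proof -
  define X0 where "X0 = 1 + q - (1 + p) * q ^ Suc n"
  define Q where "Q = q ^ (2 * Suc n)"
  have pos: "0 < X0" "0 < Q" using chain_den_pos[of n] q by (simp_all add: X0_def Q_def)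
  have "1 - h_seq p q n = (1 - q ^ Suc n) / X0"
    unfolding X0_def by (rule one_minus_h_seq)
  moreover have "h_seq p q n = q * (1 - p * q ^ n) / X0"
    by (simp add: X0_def h_seq_def)
  moreover have "kern_d p q (Suc n) ^ 2 = X0 ^ 2 / (q * Q ^ 2)"
    using q by (simp add: X0_def Q_def kern_d_def power_divide power_mult_distrib)
  moreover have "q ^ (4 * n + 4) = Q ^ 2"
    unfolding Q_def power_mult [symmetric] by (simp add: algebra_simps numeral_eq_Suc)
  then have "sw_lambda p q n = (1 - q ^ Suc n) * (1 - p * q ^ n) / Q ^ 2"
    by (simp add: sw_lambda_def)
  ultimately show ?thesis
    using pos q by (simp only:) (simp add: field_simps power2_eq_square)
qed

lemma shell_h_seq_eq_SW:
  assumes d: "\<And>n. n \<ge> 1 \<Longrightarrow> d n = kern_d p q n"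
  shows "shell (h_seq p q) d n x = SW n x p q"
proof -
  have "shell (h_seq p q) d n x = SW n x p q \<and> shell (h_seq p q) d (Suc n) x = SW (Suc n) x p q"
  proof (induction n)
    case 0
    show ?case using q p d h_seq_kern_d_0 SW_1[of q p x] by simp
  next
    case (Suc n)
    then show ?case
      using q p d h_seq_kern_d_Suc[of n] h_seq_kern_d_lambda[of n] SW_Suc_Suc[of q p n x] by simp
  qed
  then show ?thesis ..
qed

end

theorem theorem6:
  fixes p q :: real and d \<nu> \<beta> :: "nat \<Rightarrow> real"
  assumes "0 < q" and "q < 1" and "0 \<le> p" and "p < 1"
    and rec1: "\<forall>x. kern p q 1 x = (x - d 1) * kern p q 0 x"
    and rec: "\<forall>n\<ge>2. \<forall>x. kern p q n x = (x - d n) * kern p q (n - 1) x - \<nu> n * kern p q (n - 2) x"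
    and beta_def: "\<forall>n\<ge>1. \<beta> n = \<nu> (n + 1) / (d n * d (n + 1))"
  shows "(\<forall>n\<ge>1. \<beta> n = q * (1 - q ^ n) * (1 - p * q ^ n) /
            ((1 + q - (1 + p) * q ^ n) * (1 + q - (1 + p) * q ^ (n + 1))))
    \<and> maximal_param_seq \<beta> (\<lambda>n. q / (1 + q - (1 + p) * q ^ (n + 1)) * (Delta p q n / Delta p q (n + 1)))
    \<and> minimal_param_seq \<beta> (\<lambda>n. q * (1 - q ^ n) / (1 + q - (1 + p) * q ^ (n + 1)))
    \<and> param_seq \<beta> (\<lambda>n. q * (1 - p * q ^ n) / (1 + q - (1 + p) * q ^ (n + 1)))
    \<and> (\<forall>n x. shell (\<lambda>n. q * (1 - p * q ^ n) / (1 + q - (1 + p) * q ^ (n + 1))) d n x = SW n x p q)"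
proof -
  have q: "0 < q" "q < 1" and p: "0 \<le> p" "p < 1" by fact+
  have beta: "\<beta> n = beta_seq p q n" if "n \<ge> 1" for n
    using kern_recurrence_beta[OF q p rec1 rec beta_def that] .
  then have ps: "param_seq \<beta> = param_seq (beta_seq p q)"
    by (rule param_seq_cong)
  have "maximal_param_seq \<beta> (max_seq p q)"
    unfolding maximal_param_seq_def ps using param_seq_max_seq max_seq_maximal q p by blast
  moreover have "minimal_param_seq \<beta> (min_seq p q)"
    unfolding minimal_param_seq_def ps using param_seq_min_seq q p by (simp add: min_seq_def)
  moreover have "param_seq \<beta> (h_seq p q)"
    unfolding ps using q p by (rule param_seq_h_seq)
  moreover have "\<forall>n x. shell (h_seq p q) d n x = SW n x p q"
    using shell_h_seq_eq_SW[OF q p] kern_recurrence_coeffs(1)[OF q p(2) rec1 rec] by blast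
  ultimately show ?thesis
    using beta unfolding beta_seq_def max_seq_def[abs_def] min_seq_def[abs_def] h_seq_def[abs_def]
    by simp
qed

end
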